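(* Let $Q$ be a countable quandle which is semi-latin at $\hat q\in Q$, equipped with a circular order or a right order, and let $(q_i)_{i\ge1}$ be an enumeration of $Q$ with $q_1=\hat q$. Then the dynamical realization $\rho$ constructed from $(q_i)$ acts freely on $\iota(\hat q)$, i.e. for $q\ne r$ in $Q$ one has $\rho(q)(\iota(\hat q))\neq\rho(r)(\iota(\hat q))$.
   Context: Quandle: set with operation $*$ satisfying $q*q=q$, unique right division, and $(q*r)*s=(q*s)*(r*s)$. Semi-latin at $\hat q$: $r\mapsto\hat q*r$ is injective. A circular order is $c:Q^3\to\{-1,0,1\}$ vanishing exactly on triples with a repeated entry, satisfying $c(q_2,q_3,q_4)-c(q_1,q_3,q_4)+c(q_1,q_2,q_4)-c(q_1,q_2,q_3)=0$ and $c(q_1*q,q_2*q,q_3*q)=c(q_1,q_2,q_3)$. A right order is a total order with $q_1<q_2\Rightarrow q_1*q<q_2*q$. Dynamical realization (circular case): define $\iota:Q\to S^1$ by choosing distinct $\iota(q_1),\iota(q_2)$ and letting $\iota(q_n)$ be the midpoint of the unique component of $S^1\setminus\{\iota(q_1),\dots,\iota(q_{n-1})\}$ with $c(q_i,q_j,q_k)=\mathrm{ord}(\iota(q_i),\iota(q_j),\iota(q_k))$ for all $i,j,k\le n$ ($\mathrm{ord}$ the standard cyclic orientation). Right order case: $\iota:Q\to\mathbb{R}$, $\iota(q_1)$ arbitrary, $\iota(q_n)$ equal to (minimum previous value)$-1$, (maximum previous value)$+1$, or the midpoint of its immediate neighbours' values according to the position of $q_n$ among $q_1,\dots,q_{n-1}$.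 In both cases $\rho(q)(\iota(r))=\iota(r*q)$ on $\iota(Q)$, extended continuously to the closure and affinely on complementary intervals. *)

theory Defs
  imports Complex_Main "HOL-Library.Countable_Set"
begin

text \<open>Quandles on a carrier set Q with operation op (op q r = q * r).\<close>

definition quandle :: "'a set \<Rightarrow> ('a \<Rightarrow> 'a \<Rightarrow> 'a) \<Rightarrow> bool" where
  "quandle Q op \<longleftrightarrow>
     (\<forall>x\<in>Q. \<forall>y\<in>Q. op x y \<in> Q) \<and>
     (\<forall>x\<in>Q. op x x = x) \<and>
     (\<forall>q\<in>Q. \<forall>s\<in>Q. \<exists>!r. r \<in> Q \<and> op r s = q) \<and>
     (\<forall>q\<in>Q. \<forall>r\<in>Q. \<forall>s\<in>Q. op (op q r) s = op (op q s) (op r s))"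

definition semi_latin :: "'a set \<Rightarrow> ('a \<Rightarrow> 'a \<Rightarrow> 'a) \<Rightarrow> 'a \<Rightarrow> bool" where
  "semi_latin Q op qh \<longleftrightarrow> qh \<in> Q \<and> inj_on (\<lambda>r. op qh r) Q"

definition circular_order :: "'a set \<Rightarrow> ('a \<Rightarrow> 'a \<Rightarrow> 'a) \<Rightarrow> ('a \<Rightarrow> 'a \<Rightarrow> 'a \<Rightarrow> int) \<Rightarrow> bool" where
  "circular_order Q op c \<longleftrightarrow>
     (\<forall>x\<in>Q. \<forall>y\<in>Q. \<forall>z\<in>Q. c x y z \<in> {-1, 0, 1}) \<and>
     (\<forall>x\<in>Q. \<forall>y\<in>Q. \<forall>z\<in>Q. c x y z = 0 \<longleftrightarrow> (x = y \<or> y = z \<or> x = z)) \<and>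
     (\<forall>q1\<in>Q. \<forall>q2\<in>Q. \<forall>q3\<in>Q. \<forall>q4\<in>Q.
        c q2 q3 q4 - c q1 q3 q4 + c q1 q2 q4 - c q1 q2 q3 = 0) \<and>
     (\<forall>q1\<in>Q. \<forall>q2\<in>Q. \<forall>q3\<in>Q. \<forall>q\<in>Q.
        c (op q1 q) (op q2 q) (op q3 q) = c q1 q2 q3)"

definition right_order :: "'a set \<Rightarrow> ('a \<Rightarrow> 'a \<Rightarrow> 'a) \<Rightarrow> ('a \<Rightarrow> 'a \<Rightarrow> bool) \<Rightarrow> bool" where
  "right_order Q op lt \<longleftrightarrow>
     (\<forall>x\<in>Q. \<not> lt x x) \<and>
     (\<forall>x\<in>Q. \<forall>y\<in>Q. \<forall>z\<in>Q. lt x y \<longrightarrow> lt y z \<longrightarrow> lt x z) \<and>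
     (\<forall>x\<in>Q. \<forall>y\<in>Q. x \<noteq> y \<longrightarrow> lt x y \<or> lt y x) \<and>
     (\<forall>q1\<in>Q. \<forall>q2\<in>Q. \<forall>q\<in>Q. lt q1 q2 \<longrightarrow> lt (op q1 q) (op q2 q))"

text \<open>An enumeration of Q: a bijection from an initial segment J of nat (finite or all of nat)
  onto Q. Index i corresponds to the paper's q_(i+1), so e 0 is q_1.\<close>
definition enumeration :: "'a set \<Rightarrow> (nat \<Rightarrow> 'a) \<Rightarrow> nat set \<Rightarrow> bool" where
  "enumeration Q e J \<longleftrightarrow> (J = UNIV \<or> (\<exists>N. J = {..<N})) \<and> bij_betw e J Q"

text \<open>The circle S^1 is modelled as R/Z, points represented in [0,1).
  cord is the standard cyclic orientation: cord x y z = 1 iff, moving counterclockwise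
  (increasing angle) from x, one meets y before z.\<close>
definition cord :: "real \<Rightarrow> real \<Rightarrow> real \<Rightarrow> int" where
  "cord x y z = (if x = y \<or> y = z \<or> x = z then 0
                 else if frac (y - x) < frac (z - x) then 1 else -1)"

text \<open>For n \<ge> 2 (paper: q_n with n \<ge> 3), iota(e n) is the midpoint of a component
  (open counterclockwise arc from a to b with no earlier point inside) of S^1 minus the earlier
  points, and the cyclic orders agree on all triples of indices \<le> n.\<close>
definition circ_iota :: "'a set \<Rightarrow> ('a \<Rightarrow> 'a \<Rightarrow> 'a \<Rightarrow> int) \<Rightarrow> (nat \<Rightarrow> 'a) \<Rightarrow> nat set
                          \<Rightarrow> ('a \<Rightarrow> real) \<Rightarrow> bool" where
  "circ_iota Q c e J \<iota> \<longleftrightarrow>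
     (\<forall>i\<in>J. 0 \<le> \<iota> (e i) \<and> \<iota> (e i) < 1) \<and>
     (1 \<in> J \<longrightarrow> \<iota> (e 0) \<noteq> \<iota> (e 1)) \<and>
     (\<forall>n\<in>J. 2 \<le> n \<longrightarrow>
        (\<exists>a\<in>\<iota> ` e ` {..<n}. \<exists>b\<in>\<iota> ` e ` {..<n}. a \<noteq> b \<and>
           (\<forall>p\<in>\<iota> ` e ` {..<n}. \<not> (0 < frac (p - a) \<and> frac (p - a) < frac (b - a))) \<and>
           \<iota> (e n) = frac (a + frac (b - a) / 2)) \<and>
        (\<forall>i\<le>n. \<forall>j\<le>n. \<forall>k\<le>n.
           c (e i) (e j) (e k) = cord (\<iota> (e i)) (\<iota> (e j)) (\<iota> (e k))))"

definition right_iota :: "'a set \<Rightarrow> ('a \<Rightarrow> 'a \<Rightarrow> bool) \<Rightarrow> (nat \<Rightarrow> 'a) \<Rightarrow> nat set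
                          \<Rightarrow> ('a \<Rightarrow> real) \<Rightarrow> bool" where
  "right_iota Q lt e J \<iota> \<longleftrightarrow>
     (\<forall>n\<in>J. 1 \<le> n \<longrightarrow>
        (if \<forall>p\<in>e ` {..<n}. lt (e n) p then \<iota> (e n) = Min (\<iota> ` e ` {..<n}) - 1
         else if \<forall>p\<in>e ` {..<n}. lt p (e n) then \<iota> (e n) = Max (\<iota> ` e ` {..<n}) + 1
         else (\<exists>a\<in>e ` {..<n}. \<exists>b\<in>e ` {..<n}. lt a (e n) \<and> lt (e n) b \<and>
                 (\<forall>p\<in>e ` {..<n}. \<not> (lt a p \<and> lt p b)) \<and>
                 \<iota> (e n) = (\<iota> a + \<iota> b) / 2)))"

text \<open>The defining property of the action rho on iota(Q): rho(q)(iota r) = iota(r * q).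
  (The continuous/affine extension off iota(Q) is not constrained here.)\<close>
definition realizes :: "'a set \<Rightarrow> ('a \<Rightarrow> 'a \<Rightarrow> 'a) \<Rightarrow> ('a \<Rightarrow> real) \<Rightarrow> ('a \<Rightarrow> real \<Rightarrow> real) \<Rightarrow> bool" where
  "realizes Q op \<iota> \<rho> \<longleftrightarrow> (\<forall>q\<in>Q. \<forall>r\<in>Q. \<rho> q (\<iota> r) = \<iota> (op r q))"

end

theory Submission
  imports Defs
begin

(* On iota(Q) the realization satisfies rho(q)(iota qh) = iota(qh * q), so freeness at iota qh
   is the injectivity of q \<mapsto> qh * q (semi-latinness) composed with the injectivity of iota.
   The latter holds in both cases: in the circular case iota reproduces the cyclic order c, which
   vanishes only on degenerate triples, and in the right-order case iota is strictly increasing,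
   because each new point is placed below, above, or in the gap of the earlier ones that its
   position in the order prescribes. Countability of Q and the choice e 0 = qh are needed only
   for the construction and the continuous extension of rho, not for this argument. *)

lemma enumeration_downward_closed:
  assumes "enumeration Q e J" and "n \<in> J" and "i \<le> n"
  shows "i \<in> J"
  using assms unfolding enumeration_def by auto

lemma enumeration_bij_betw: "enumeration Q e J \<Longrightarrow> bij_betw e J Q"
  unfolding enumeration_def by simp

lemma circ_iota_inj_on:
  assumes en: "enumeration Q e J" and ci: "circ_iota Q c e J \<iota>"
    and c_zero: "\<And>x y z. \<lbrakk>x \<in> Q; y \<in> Q; z \<in> Q; c x y z = 0\<rbrakk> \<Longrightarrow> x = y \<or> y = z \<or> x = z"
  shows "inj_on \<iota> Q"
proof (rule inj_onI, rule ccontr)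
  fix x y assume "x \<in> Q" "y \<in> Q" and \<iota>_eq: "\<iota> x = \<iota> y" and "x \<noteq> y"
  have bij: "bij_betw e J Q" using en by (rule enumeration_bij_betw)
  then obtain i j where ij: "i \<in> J" "j \<in> J" "x = e i" "y = e j"
    using \<open>x \<in> Q\<close> \<open>y \<in> Q\<close> by (metis bij_betw_imp_surj_on imageE)
  with \<open>x \<noteq> y\<close> have "i \<noteq> j" by blast
  show False
  proof (cases "2 \<in> J")
    case True
    have "\<exists>k::nat. k \<le> 2 \<and> k \<noteq> i \<and> k \<noteq> j" by presburger
    then obtain k :: nat where k: "k \<le> 2" "k \<noteq> i" "k \<noteq> j" by blast
    define n where "n = max (max i j) 2"
    have "n \<in> J" using True ij unfolding n_def by (simp add: max_def)
    have kJ: "k \<in> J" using enumeration_downward_closed[OF en True k(1)] .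
    have "c x y (e k) = cord (\<iota> x) (\<iota> y) (\<iota> (e k))"
      using ci \<open>n \<in> J\<close> k(1) ij unfolding circ_iota_def n_def by fastforce
    also have "\<dots> = 0" using \<iota>_eq unfolding cord_def by simp
    finally have "x = y \<or> y = e k \<or> x = e k"
      using c_zero \<open>x \<in> Q\<close> \<open>y \<in> Q\<close> kJ bij_betw_apply[OF bij] by blast
    then show False
      using \<open>x \<noteq> y\<close> ij kJ k bij_betw_imp_inj_on[OF bij] by (metis inj_onD)
  next
    case False
    then have "i < 2" "j < 2"
      using enumeration_downward_closed[OF en] ij by (metis not_less)+
    with \<open>i \<noteq> j\<close> have "{i, j} = {0, 1}" by auto
    then have "1 \<in> J" and "\<iota> (e 0) = \<iota> (e 1)"
      using ij \<iota>_eq by (auto simp: doubleton_eq_iff)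
    then show False using ci unfolding circ_iota_def by blast
  qed
qed

locale strict_total_order_on =
  fixes Q :: "'a set" and lt :: "'a \<Rightarrow> 'a \<Rightarrow> bool"
  assumes lt_irrefl: "x \<in> Q \<Longrightarrow> \<not> lt x x"
    and lt_trans: "\<lbrakk>x \<in> Q; y \<in> Q; z \<in> Q; lt x y; lt y z\<rbrakk> \<Longrightarrow> lt x z"
    and lt_total: "\<lbrakk>x \<in> Q; y \<in> Q; x \<noteq> y\<rbrakk> \<Longrightarrow> lt x y \<or> lt y x"
begin

lemma inj_on_if_monotone_on:
  fixes \<iota> :: "'a \<Rightarrow> 'b::order"
  assumes "S \<subseteq> Q" and "monotone_on S lt (<) \<iota>"
  shows "inj_on \<iota> S"
proof (rule inj_onI, rule ccontr)
  fix x y assume "x \<in> S" "y \<in> S" "\<iota> x = \<iota> y" "x \<noteq> y"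
  then have "lt x y \<or> lt y x" using lt_total \<open>S \<subseteq> Q\<close> by blast
  then show False
    using monotone_onD[OF assms(2)] \<open>x \<in> S\<close> \<open>y \<in> S\<close> \<open>\<iota> x = \<iota> y\<close> by fastforce
qed

lemma monotone_on_insertI:
  assumes "x \<in> Q" and "monotone_on S lt (<) \<iota>"
    and "\<And>p. \<lbrakk>p \<in> S; lt p x\<rbrakk> \<Longrightarrow> \<iota> p < \<iota> x"
    and "\<And>p. \<lbrakk>p \<in> S; lt x p\<rbrakk> \<Longrightarrow> \<iota> x < \<iota> p"
  shows "monotone_on (insert x S) lt (<) \<iota>"
  using assms lt_irrefl by (auto simp: monotone_on_def)

lemma monotone_on_insert_least:
  fixes \<iota> :: "'a \<Rightarrow> real"
  assumes "x \<in> Q" "S \<subseteq> Q" "finite S" "monotone_on S lt (<) \<iota>"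
    and least: "\<forall>p\<in>S. lt x p" and "\<iota> x = Min (\<iota> ` S) - 1"
  shows "monotone_on (insert x S) lt (<) \<iota>"
proof (rule monotone_on_insertI)
  fix p assume "p \<in> S"
  then have "Min (\<iota> ` S) \<le> \<iota> p" using \<open>finite S\<close> by simp
  then show "\<iota> x < \<iota> p" using assms(6) by linarith
  assume "lt p x"
  with \<open>p \<in> S\<close> show "\<iota> p < \<iota> x" using least lt_trans lt_irrefl assms(1,2) by blast
qed (use assms in auto)

lemma monotone_on_insert_greatest:
  fixes \<iota> :: "'a \<Rightarrow> real"
  assumes "x \<in> Q" "S \<subseteq> Q" "finite S" "monotone_on S lt (<) \<iota>"
    and greatest: "\<forall>p\<in>S. lt p x" and "\<iota> x = Max (\<iota> ` S) + 1"
  shows "monotone_on (insert x S) lt (<) \<iota>"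
proof (rule monotone_on_insertI)
  fix p assume "p \<in> S"
  then have "\<iota> p \<le> Max (\<iota> ` S)" using \<open>finite S\<close> by simp
  then show "\<iota> p < \<iota> x" using assms(6) by linarith
  assume "lt x p"
  with \<open>p \<in> S\<close> show "\<iota> x < \<iota> p" using greatest lt_trans lt_irrefl assms(1,2) by blast
qed (use assms in auto)

lemma monotone_on_insert_between:
  fixes \<iota> :: "'a \<Rightarrow> real"
  assumes "x \<in> Q" "S \<subseteq> Q" and mono: "monotone_on S lt (<) \<iota>"
    and ab: "a \<in> S" "b \<in> S" "lt a x" "lt x b"
    and gap: "\<forall>p\<in>S. \<not> (lt a p \<and> lt p b)" and mid: "\<iota> x = (\<iota> a + \<iota> b) / 2"
  shows "monotone_on (insert x S) lt (<) \<iota>"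
proof (rule monotone_on_insertI)
  have "a \<in> Q" "b \<in> Q" using ab \<open>S \<subseteq> Q\<close> by auto
  then have "\<iota> a < \<iota> b" using monotone_onD[OF mono] ab lt_trans \<open>x \<in> Q\<close> by blast
  then have a_x: "\<iota> a < \<iota> x" and x_b: "\<iota> x < \<iota> b" using mid by auto
  fix p assume "p \<in> S"
  then have "p \<in> Q" using \<open>S \<subseteq> Q\<close> by auto
  show "\<iota> p < \<iota> x" if "lt p x"
  proof -
    have "lt p b" using that ab lt_trans \<open>p \<in> Q\<close> \<open>x \<in> Q\<close> \<open>b \<in> Q\<close> by blast
    then have "p = a \<or> lt p a" using gap \<open>p \<in> S\<close> lt_total \<open>p \<in> Q\<close> \<open>a \<in> Q\<close> by blast
    then show ?thesis using a_x monotone_onD[OF mono \<open>p \<in> S\<close> \<open>a \<in> S\<close>] by auto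
  qed
  show "\<iota> x < \<iota> p" if "lt x p"
  proof -
    have "lt a p" using that ab lt_trans \<open>p \<in> Q\<close> \<open>x \<in> Q\<close> \<open>a \<in> Q\<close> by blast
    then have "p = b \<or> lt b p" using gap \<open>p \<in> S\<close> lt_total \<open>p \<in> Q\<close> \<open>b \<in> Q\<close> by blast
    then show ?thesis using x_b monotone_onD[OF mono \<open>b \<in> S\<close> \<open>p \<in> S\<close>] by auto
  qed
qed (use assms in auto)

lemma right_iota_monotone_on:
  fixes \<iota> :: "'a \<Rightarrow> real"
  assumes en: "enumeration Q e J" and ri: "right_iota Q lt e J \<iota>" and "n \<in> J"
  shows "monotone_on (e ` {..n}) lt (<) \<iota>"
  using \<open>n \<in> J\<close>
proof (induction n)
  case 0
  then have "e 0 \<in> Q" using bij_betw_apply[OF enumeration_bij_betw[OF en]] by blast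
  then show ?case using lt_irrefl by (auto simp: monotone_on_def)
next
  case (Suc n)
  have bij: "bij_betw e J Q" using en by (rule enumeration_bij_betw)
  define S where "S = e ` {..n}"
  define x where "x = e (Suc n)"
  have "e i \<in> Q" if "i \<le> Suc n" for i
    using bij_betw_apply[OF bij enumeration_downward_closed[OF en Suc.prems that]] .
  then have "S \<subseteq> Q" "x \<in> Q" unfolding S_def x_def by auto
  have "finite S" unfolding S_def by simp
  have mono: "monotone_on S lt (<) \<iota>"
    using Suc.IH enumeration_downward_closed[OF en Suc.prems] unfolding S_def by simp
  have step: "if \<forall>p\<in>S. lt x p then \<iota> x = Min (\<iota> ` S) - 1
      else if \<forall>p\<in>S. lt p x then \<iota> x = Max (\<iota> ` S) + 1
      else \<exists>a\<in>S. \<exists>b\<in>S. lt a x \<and> lt x b \<and> (\<forall>p\<in>S. \<not> (lt a p \<and> lt p b)) \<and>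
        \<iota> x = (\<iota> a + \<iota> b) / 2"
    using ri[unfolded right_iota_def, rule_format, OF Suc.prems, unfolded lessThan_Suc_atMost,
          folded S_def x_def]
    by simp
  have "monotone_on (insert x S) lt (<) \<iota>"
  proof (cases "\<forall>p\<in>S. lt x p")
    case True
    then show ?thesis
      using monotone_on_insert_least \<open>x \<in> Q\<close> \<open>S \<subseteq> Q\<close> \<open>finite S\<close> mono step by simp
  next
    case not_least: False
    show ?thesis
    proof (cases "\<forall>p\<in>S. lt p x")
      case True
      then show ?thesis
        using monotone_on_insert_greatest \<open>x \<in> Q\<close> \<open>S \<subseteq> Q\<close> \<open>finite S\<close> mono step not_least
        by simp
    next
      case False
      then obtain a b where "a \<in> S" "b \<in> S" "lt a x" "lt x b"
        "\<forall>p\<in>S. \<not> (lt a p \<and> lt p b)" "\<iota> x = (\<iota> a + \<iota> b) / 2"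
        using step unfolding if_not_P[OF not_least] if_not_P[OF False] by blast
      then show ?thesis using monotone_on_insert_between[OF \<open>x \<in> Q\<close> \<open>S \<subseteq> Q\<close> mono] by blast
    qed
  qed
  moreover have "e ` {..Suc n} = insert x S"
    unfolding S_def x_def by (simp add: atMost_Suc)
  ultimately show ?case by simp
qed

lemma right_iota_inj_on:
  fixes \<iota> :: "'a \<Rightarrow> real"
  assumes en: "enumeration Q e J" and ri: "right_iota Q lt e J \<iota>"
  shows "inj_on \<iota> Q"
proof (rule inj_onI)
  fix x y assume "x \<in> Q" "y \<in> Q" "\<iota> x = \<iota> y"
  have bij: "bij_betw e J Q" using en by (rule enumeration_bij_betw)
  then obtain i j where ij: "i \<in> J" "j \<in> J" "x = e i" "y = e j"
    using \<open>x \<in> Q\<close> \<open>y \<in> Q\<close> by (metis bij_betw_imp_surj_on imageE)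
  define n where "n = max i j"
  have "n \<in> J" using ij unfolding n_def by (simp add: max_def)
  have "e ` {..n} \<subseteq> Q"
    using enumeration_downward_closed[OF en \<open>n \<in> J\<close>] bij_betw_apply[OF bij] by auto
  then have "inj_on \<iota> (e ` {..n})"
    using right_iota_monotone_on[OF en ri \<open>n \<in> J\<close>] by (rule inj_on_if_monotone_on)
  moreover have "x \<in> e ` {..n}" "y \<in> e ` {..n}" using ij unfolding n_def by auto
  ultimately show "x = y" using \<open>\<iota> x = \<iota> y\<close> inj_onD by metis
qed

end

lemma right_order_strict_total_order_on:
  assumes "right_order Q op lt"
  shows "strict_total_order_on Q lt"
proof
  note order = assms[unfolded right_order_def]
  show "\<not> lt x x" if "x \<in> Q" for x
    using order that by blast
  show "lt x z" if "x \<in> Q" "y \<in> Q" "z \<in> Q" "lt x y" "lt y z" for x y z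
    using order that by blast
  show "lt x y \<or> lt y x" if "x \<in> Q" "y \<in> Q" "x \<noteq> y" for x y
    using order that by blast
qed

lemma realization_inj_on_orbit:
  assumes "quandle Q op" and "semi_latin Q op qh" and "realizes Q op \<iota> \<rho>" and "inj_on \<iota> Q"
  shows "inj_on (\<lambda>q. \<rho> q (\<iota> qh)) Q"
proof -
  have "qh \<in> Q" and inj_qh: "inj_on (op qh) Q" using assms(2) unfolding semi_latin_def by auto
  have "op qh ` Q \<subseteq> Q"
    using \<open>qh \<in> Q\<close> assms(1)[unfolded quandle_def, THEN conjunct1] by blast
  have orbit: "\<rho> q (\<iota> qh) = \<iota> (op qh q)" if "q \<in> Q" for q
    using assms(3) \<open>qh \<in> Q\<close> that unfolding realizes_def by simp
  have "inj_on (\<iota> \<circ> op qh) Q"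
    using comp_inj_on[OF inj_qh inj_on_subset[OF assms(4) \<open>op qh ` Q \<subseteq> Q\<close>]] .
  then show ?thesis by (simp add: inj_on_cong[OF orbit] comp_def)
qed

theorem proposition3p7:
  fixes Q :: "'a set" and op :: "'a \<Rightarrow> 'a \<Rightarrow> 'a" and qh :: 'a
    and e :: "nat \<Rightarrow> 'a" and J :: "nat set"
  assumes "quandle Q op" and "countable Q" and "semi_latin Q op qh"
    and "enumeration Q e J" and "e 0 = qh"
  shows "(\<forall>c \<iota> \<rho>. circular_order Q op c \<and> circ_iota Q c e J \<iota> \<and> realizes Q op \<iota> \<rho> \<longrightarrow>
            (\<forall>q\<in>Q. \<forall>r\<in>Q. q \<noteq> r \<longrightarrow> \<rho> q (\<iota> qh) \<noteq> \<rho> r (\<iota> qh)))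
       \<and> (\<forall>lt \<iota> \<rho>. right_order Q op lt \<and> right_iota Q lt e J \<iota> \<and> realizes Q op \<iota> \<rho> \<longrightarrow>
            (\<forall>q\<in>Q. \<forall>r\<in>Q. q \<noteq> r \<longrightarrow> \<rho> q (\<iota> qh) \<noteq> \<rho> r (\<iota> qh)))"
proof (intro conjI allI impI; elim conjE)
  fix c \<iota> \<rho>
  assume "circular_order Q op c" "circ_iota Q c e J \<iota>" "realizes Q op \<iota> \<rho>"
  have "x = y \<or> y = z \<or> x = z" if "x \<in> Q" "y \<in> Q" "z \<in> Q" "c x y z = 0" for x y z
    using \<open>circular_order Q op c\<close>[unfolded circular_order_def] that by blast
  then have "inj_on \<iota> Q" by (rule circ_iota_inj_on[OF assms(4) \<open>circ_iota Q c e J \<iota>\<close>])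
  then show "\<forall>q\<in>Q. \<forall>r\<in>Q. q \<noteq> r \<longrightarrow> \<rho> q (\<iota> qh) \<noteq> \<rho> r (\<iota> qh)"
    using realization_inj_on_orbit[OF assms(1,3) \<open>realizes Q op \<iota> \<rho>\<close>]
    unfolding inj_on_def by blast
next
  fix lt \<iota> \<rho>
  assume "right_order Q op lt" "right_iota Q lt e J \<iota>" "realizes Q op \<iota> \<rho>"
  have "inj_on \<iota> Q"
    using strict_total_order_on.right_iota_inj_on[OF right_order_strict_total_order_on assms(4)]
      \<open>right_order Q op lt\<close> \<open>right_iota Q lt e J \<iota>\<close> .
  then show "\<forall>q\<in>Q. \<forall>r\<in>Q. q \<noteq> r \<longrightarrow> \<rho> q (\<iota> qh) \<noteq> \<rho> r (\<iota> qh)"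
    using realization_inj_on_orbit[OF assms(1,3) \<open>realizes Q op \<iota> \<rho>\<close>]
    unfolding inj_on_def by blast
qed

end
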